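(* Let $X,Y$ be real Banach spaces both having the strong diameter two property. Then the projective tensor product $X\widehat{\otimes}_\pi Y$ has the strong diameter two property.
   Context: A slice of $B_X$ is $\{x\in B_X:x^*(x)>1-\alpha\}$ with $x^*\in S_{X^*}$, $0<\alpha<1$. A Banach space has the strong diameter two property (SD2P) if every convex combination $\sum_{i=1}^n\lambda_iS_i$ of slices $S_i$ of its unit ball ($\lambda_i\ge0$, $\sum\lambda_i=1$) has diameter $2$. $X\widehat{\otimes}_\pi Y$ is the completion of $X\otimes Y$ under $\|u\|=\inf\{\sum_{i=1}^n\|x_i\|\|y_i\|: u=\sum_{i=1}^n x_i\otimes y_i\}$. *)

theory Defs
  imports "HOL-Analysis.Analysis"
begin

text \<open>A (semi)normed real vector space presented by explicit operations on a carrier.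
  A genuine normed space (type class instance) is presented by normed_space_of.\<close>

record 'v nspace =
  carrier :: "'v set"
  vadd    :: "'v \<Rightarrow> 'v \<Rightarrow> 'v"
  vscale  :: "real \<Rightarrow> 'v \<Rightarrow> 'v"
  vzero   :: "'v"
  vnorm   :: "'v \<Rightarrow> real"

definition normed_space_of :: "'a::real_normed_vector itself \<Rightarrow> 'a nspace" where
  "normed_space_of _ = \<lparr>carrier = UNIV, vadd = (+), vscale = (*\<^sub>R), vzero = 0, vnorm = norm\<rparr>"

definition dual_unit :: "'v nspace \<Rightarrow> ('v \<Rightarrow> real) \<Rightarrow> bool" where
  "dual_unit E f \<longleftrightarrow>
     (\<forall>u\<in>carrier E. \<forall>v\<in>carrier E. f (vadd E u v) = f u + f v) \<and>
     (\<forall>c. \<forall>v\<in>carrier E. f (vscale E c v) = c * f v) \<and>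
     (\<exists>C. \<forall>v\<in>carrier E. \<bar>f v\<bar> \<le> C * vnorm E v) \<and>
     (SUP v\<in>{v\<in>carrier E. vnorm E v \<le> 1}. f v) = 1"

definition slice :: "'v nspace \<Rightarrow> ('v \<Rightarrow> real) \<Rightarrow> real \<Rightarrow> 'v set" where
  "slice E f \<alpha> = {x\<in>carrier E. vnorm E x \<le> 1 \<and> f x > 1 - \<alpha>}"

primrec lincomb :: "'v nspace \<Rightarrow> nat \<Rightarrow> (nat \<Rightarrow> real) \<Rightarrow> (nat \<Rightarrow> 'v) \<Rightarrow> 'v" where
  "lincomb E 0 l x = vzero E"
| "lincomb E (Suc n) l x = vadd E (lincomb E n l x) (vscale E (l n) (x n))"

definition ndiam :: "'v nspace \<Rightarrow> 'v set \<Rightarrow> real" where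
  "ndiam E S = Sup {vnorm E (vadd E a (vscale E (-1) b)) | a b. a \<in> S \<and> b \<in> S}"

definition SD2P :: "'v nspace \<Rightarrow> bool" where
  "SD2P E \<longleftrightarrow>
     (\<forall>n::nat. \<forall>l f \<alpha>. n > 0 \<longrightarrow> (\<forall>i<n. l i \<ge> 0) \<longrightarrow> (\<Sum>i<n. l i) = 1 \<longrightarrow>
        (\<forall>i<n. dual_unit E (f i) \<and> 0 < \<alpha> i \<and> \<alpha> i < 1) \<longrightarrow>
        ndiam E {lincomb E n l x | x. \<forall>i<n. x i \<in> slice E (f i) (\<alpha> i)} = 2)"

text \<open>Free real vector space on X \<times> Y: finitely supported functions.\<close>
definition free_vs :: "('a \<times> 'b \<Rightarrow> real) set" where
  "free_vs = {w. finite {p. w p \<noteq> 0}}"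

definition delta :: "'a \<Rightarrow> 'b \<Rightarrow> ('a \<times> 'b \<Rightarrow> real)" where
  "delta x y = (\<lambda>p. if p = (x, y) then 1 else 0)"

definition bilin_rels :: "('a::real_vector \<times> 'b::real_vector \<Rightarrow> real) set" where
  "bilin_rels =
     {(\<lambda>p. delta (x + x') y p - delta x y p - delta x' y p) | x x' y. True} \<union>
     {(\<lambda>p. delta x (y + y') p - delta x y p - delta x y' p) | x y y'. True} \<union>
     {(\<lambda>p. delta (c *\<^sub>R x) y p - c * delta x y p) | c x y. True} \<union>
     {(\<lambda>p. delta x (c *\<^sub>R y) p - c * delta x y p) | c x y. True}"

text \<open>Their linear span; X \<otimes> Y is free_vs modulo this subspace.\<close>
definition tensor_null :: "('a::real_vector \<times> 'b::real_vector \<Rightarrow> real) set" where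
  "tensor_null = {w. \<exists>(n::nat) c (r :: nat \<Rightarrow> ('a \<times> 'b \<Rightarrow> real)). (\<forall>i<n. r i \<in> bilin_rels) \<and> w = (\<lambda>p. \<Sum>i<n. c i * r i p)}"

definition proj_norm :: "('a::real_normed_vector \<times> 'b::real_normed_vector \<Rightarrow> real) \<Rightarrow> real" where
  "proj_norm w = Inf {(\<Sum>i<n. norm (x i) * norm (y i)) | (n::nat) x y.
       (\<lambda>p. w p - (\<Sum>i<n. delta (x i) (y i) p)) \<in> tensor_null}"

text \<open>Completion of (X \<otimes> Y, projective norm): Cauchy sequences of algebraic tensors,
  with the limit seminorm (identification of equivalent Cauchy sequences is implicit:
  the seminorm vanishes exactly on null sequences).\<close>
definition proj_tensor :: "'a::real_normed_vector itself \<Rightarrow> 'b::real_normed_vector itself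
    \<Rightarrow> (nat \<Rightarrow> ('a \<times> 'b \<Rightarrow> real)) nspace" where
  "proj_tensor _ _ = \<lparr>
     carrier = {s. (\<forall>n. s n \<in> free_vs) \<and>
                   (\<forall>e>0. \<exists>M. \<forall>m\<ge>M. \<forall>n\<ge>M. proj_norm (\<lambda>p. s m p - s n p) < e)},
     vadd = (\<lambda>s t n p. s n p + t n p),
     vscale = (\<lambda>c s n p. c * s n p),
     vzero = (\<lambda>n p. 0),
     vnorm = (\<lambda>s. lim (\<lambda>n. proj_norm (s n)))\<rparr>"

end

theory Submission
  imports Defs
begin

text \<open>A norm-one functional f on the projective tensor product is a bounded bilinear
  form B, and the projective unit ball is the closed convex hull of the elementary tensors
  x \<otimes> y with \<parallel>x\<parallel>, \<parallel>y\<parallel> \<le> 1; hence every slice S(f, \<alpha>) contains such a tensor x0 \<otimes> y0.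
  Given slices S(f_i, \<alpha>_i) and weights l_i, the SD2P of Y applied to the slices of the functionals
  B_i(x0_i, -) yields y_i, y'_i and a norming functional hY with \<Sum> l_i hY(y_i - y'_i) close to 2,
  so that \<Sum> l_i hY(y_i) is close to 1. The SD2P of X applied to the slices of B_i(-, y_i) then
  yields x_i, x'_i and hX. All x_i \<otimes> y_i and x'_i \<otimes> y_i lie in S(f_i, \<alpha>_i), and testing
  \<Sum> l_i (x_i - x'_i) \<otimes> y_i against the bilinear form hX \<otimes> hY shows that its norm is close to 2.
  The norming functionals come from the Hahn--Banach theorem, via Zorn's lemma on norm-dominated
  linear graphs.\<close>

section \<open>Norming functionals\<close>

definition dominated_linear_graph :: "('a::real_normed_vector \<times> real) set \<Rightarrow> bool" where
  "dominated_linear_graph G \<longleftrightarrow> (0, 0) \<in> G \<and>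
     (\<forall>x a y b. (x, a) \<in> G \<longrightarrow> (y, b) \<in> G \<longrightarrow> (x + y, a + b) \<in> G) \<and>
     (\<forall>c x a. (x, a) \<in> G \<longrightarrow> (c *\<^sub>R x, c * a) \<in> G) \<and>
     (\<forall>x a. (x, a) \<in> G \<longrightarrow> a \<le> norm x)"

lemma dominated_linear_graph_functional:
  assumes G: "dominated_linear_graph G" and "(x, a) \<in> G" "(x, b) \<in> G"
  shows "a = b"
proof -
  have "(x + (-1) *\<^sub>R x, a + (-1) * b) \<in> G" "(x + (-1) *\<^sub>R x, b + (-1) * a) \<in> G"
    using G assms(2,3) unfolding dominated_linear_graph_def by blast+
  then have "a - b \<le> 0" "b - a \<le> 0"
    using G unfolding dominated_linear_graph_def by fastforce+
  then show ?thesis by simp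
qed

text \<open>The admissible values c at a new vector w: the lower bounds a - \<parallel>x - w\<parallel> and the upper
  bounds \<parallel>y + w\<parallel> - b are compatible by the triangle inequality.\<close>
lemma dominated_linear_graph_extension_value:
  assumes G: "dominated_linear_graph G"
  obtains c where "\<And>x a. (x, a) \<in> G \<Longrightarrow> a - norm (x - w) \<le> c"
    "\<And>x a. (x, a) \<in> G \<Longrightarrow> c \<le> norm (x + w) - a"
proof -
  define A where "A = {a - norm (x - w) | x a. (x, a) \<in> G}"
  have A_le: "t \<le> norm (y + w) - b" if "t \<in> A" "(y, b) \<in> G" for t y b
  proof -
    obtain x a where t: "t = a - norm (x - w)" "(x, a) \<in> G"
      using \<open>t \<in> A\<close> unfolding A_def by blast
    then have "(x + y, a + b) \<in> G" using G that(2) unfolding dominated_linear_graph_def by blast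
    then have "a + b \<le> norm ((x - w) + (y + w))" using G unfolding dominated_linear_graph_def by simp
    also have "\<dots> \<le> norm (x - w) + norm (y + w)" by (rule norm_triangle_ineq)
    finally show ?thesis using t by simp
  qed
  have "A \<noteq> {}" using G unfolding A_def dominated_linear_graph_def by blast
  have "bdd_above A" using A_le G unfolding bdd_above_def dominated_linear_graph_def by blast
  show ?thesis
  proof (rule that)
    show "a - norm (x - w) \<le> Sup A" if "(x, a) \<in> G" for x a
      using \<open>bdd_above A\<close> that by (auto intro!: cSup_upper simp: A_def)
    show "Sup A \<le> norm (x + w) - a" if "(x, a) \<in> G" for x a
      using \<open>A \<noteq> {}\<close> that A_le by (auto intro!: cSup_least)
  qed
qed

lemma dominated_linear_graph_extension_bound:
  assumes G: "dominated_linear_graph G" and xa: "(x, a) \<in> G"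
    and c_lower: "\<And>x a. (x, a) \<in> G \<Longrightarrow> a - norm (x - w) \<le> c"
    and c_upper: "\<And>x a. (x, a) \<in> G \<Longrightarrow> c \<le> norm (x + w) - a"
  shows "a + t * c \<le> norm (x + t *\<^sub>R w)"
proof (cases t "0 :: real" rule: linorder_cases)
  case less
  have "((-1/t) *\<^sub>R x, (-1/t) * a) \<in> G" using G xa unfolding dominated_linear_graph_def by blast
  then have "- t * ((-1/t) * a - norm ((-1/t) *\<^sub>R x - w)) \<le> - t * c"
    using less c_lower by (intro mult_left_mono) auto
  moreover have "- t * norm ((-1/t) *\<^sub>R x - w) = norm ((-t) *\<^sub>R ((-1/t) *\<^sub>R x - w))"
    using less by simp
  moreover have "(-t) *\<^sub>R ((-1/t) *\<^sub>R x - w) = x + t *\<^sub>R w"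
    using less by (simp add: algebra_simps)
  ultimately show ?thesis using less by (simp add: algebra_simps)
next
  case equal
  then show ?thesis using G xa unfolding dominated_linear_graph_def by simp
next
  case greater
  have "((1/t) *\<^sub>R x, (1/t) * a) \<in> G" using G xa unfolding dominated_linear_graph_def by blast
  then have "t * c \<le> t * (norm ((1/t) *\<^sub>R x + w) - (1/t) * a)"
    using greater c_upper by (intro mult_left_mono) auto
  moreover have "t * norm ((1/t) *\<^sub>R x + w) = norm (t *\<^sub>R ((1/t) *\<^sub>R x + w))"
    using greater by simp
  moreover have "t *\<^sub>R ((1/t) *\<^sub>R x + w) = x + t *\<^sub>R w"
    using greater by (simp add: algebra_simps)
  ultimately show ?thesis using greater by (simp add: algebra_simps)
qed

lemma dominated_linear_graph_extension:
  assumes G: "dominated_linear_graph G"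
    and c: "\<And>x a. (x, a) \<in> G \<Longrightarrow> a - norm (x - w) \<le> c" "\<And>x a. (x, a) \<in> G \<Longrightarrow> c \<le> norm (x + w) - a"
  shows "dominated_linear_graph {(x + t *\<^sub>R w, a + t * c) | x a t. (x, a) \<in> G}"
    (is "dominated_linear_graph ?G'")
  unfolding dominated_linear_graph_def
proof (intro conjI allI impI)
  show "(0, 0) \<in> ?G'" using G unfolding dominated_linear_graph_def by force
next
  fix x a y b assume "(x, a) \<in> ?G'" "(y, b) \<in> ?G'"
  then obtain x1 a1 t1 x2 a2 t2 where
    "x = x1 + t1 *\<^sub>R w" "a = a1 + t1 * c" "(x1, a1) \<in> G"
    "y = x2 + t2 *\<^sub>R w" "b = a2 + t2 * c" "(x2, a2) \<in> G"
    by blast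
  moreover have "(x1 + x2, a1 + a2) \<in> G"
    using G \<open>(x1, a1) \<in> G\<close> \<open>(x2, a2) \<in> G\<close> unfolding dominated_linear_graph_def by blast
  ultimately have "(x + y, a + b) = ((x1 + x2) + (t1 + t2) *\<^sub>R w, (a1 + a2) + (t1 + t2) * c)"
    and "(x1 + x2, a1 + a2) \<in> G"
    by (auto simp: algebra_simps)
  then show "(x + y, a + b) \<in> ?G'" by blast
next
  fix k x a assume "(x, a) \<in> ?G'"
  then obtain x1 a1 t1 where "x = x1 + t1 *\<^sub>R w" "a = a1 + t1 * c" "(x1, a1) \<in> G"
    by blast
  moreover have "(k *\<^sub>R x1, k * a1) \<in> G"
    using G \<open>(x1, a1) \<in> G\<close> unfolding dominated_linear_graph_def by blast
  ultimately have "(k *\<^sub>R x, k * a) = (k *\<^sub>R x1 + (k * t1) *\<^sub>R w, k * a1 + (k * t1) * c)"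
    and "(k *\<^sub>R x1, k * a1) \<in> G"
    by (auto simp: algebra_simps)
  then show "(k *\<^sub>R x, k * a) \<in> ?G'" by blast
next
  fix x a assume "(x, a) \<in> ?G'"
  then show "a \<le> norm x" using dominated_linear_graph_extension_bound[OF G _ c] by blast
qed

lemma dominated_linear_graph_extend:
  assumes G: "dominated_linear_graph G" and w: "\<forall>a. (w, a) \<notin> G"
  shows "\<exists>G'. dominated_linear_graph G' \<and> G \<subset> G'"
proof -
  obtain c where c: "\<And>x a. (x, a) \<in> G \<Longrightarrow> a - norm (x - w) \<le> c"
    "\<And>x a. (x, a) \<in> G \<Longrightarrow> c \<le> norm (x + w) - a"
    using dominated_linear_graph_extension_value[OF G] by blast
  let ?G' = "{(x + t *\<^sub>R w, a + t * c) | x a t. (x, a) \<in> G}"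
  have "G \<subseteq> ?G'" by force
  moreover have "(w, c) \<in> ?G'" using G unfolding dominated_linear_graph_def by force
  ultimately show ?thesis using dominated_linear_graph_extension[OF G c] w by blast
qed

lemma dominated_linear_graph_maximal:
  assumes "dominated_linear_graph G"
  obtains M where "dominated_linear_graph M" "G \<subseteq> M" "\<And>w. \<exists>a. (w, a) \<in> M"
proof -
  let ?\<G> = "{M. dominated_linear_graph M \<and> G \<subseteq> M}"
  have "\<Union>\<C> \<in> ?\<G>" if "\<C> \<noteq> {}" and ch: "subset.chain ?\<G> \<C>" for \<C>
  proof -
    have members: "dominated_linear_graph A" "G \<subseteq> A" if "A \<in> \<C>" for A
      using ch that unfolding subset.chain_def by blast+
    have add: "(x + y, a + b) \<in> \<Union>\<C>" if xa: "(x, a) \<in> \<Union>\<C>" and yb: "(y, b) \<in> \<Union>\<C>" for x a y b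
    proof -
      obtain A B where AB: "A \<in> \<C>" "B \<in> \<C>" "(x, a) \<in> A" "(y, b) \<in> B" using xa yb by blast
      then consider "A \<subseteq> B" | "B \<subseteq> A" using ch unfolding subset.chain_def by blast
      then obtain D where "D \<in> \<C>" "(x, a) \<in> D" "(y, b) \<in> D" using AB by (cases) blast+
      then show ?thesis using members(1)[of D] unfolding dominated_linear_graph_def by blast
    qed
    obtain A where "A \<in> \<C>" using \<open>\<C> \<noteq> {}\<close> by blast
    then have "(0, 0) \<in> \<Union>\<C>" "G \<subseteq> \<Union>\<C>"
      using members unfolding dominated_linear_graph_def by blast+
    moreover have "(c *\<^sub>R x, c * a) \<in> \<Union>\<C>" "a \<le> norm x" if "(x, a) \<in> \<Union>\<C>" for c x a
      using that members unfolding dominated_linear_graph_def by blast+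
    ultimately show ?thesis using add unfolding dominated_linear_graph_def by blast
  qed
  then obtain M where M: "M \<in> ?\<G>" and max: "\<forall>X\<in>?\<G>. M \<subseteq> X \<longrightarrow> X = M"
    using subset_Zorn_nonempty[of ?\<G>] assms by blast
  have "\<exists>a. (w, a) \<in> M" for w
    using dominated_linear_graph_extend[of M w] M max by blast
  then show ?thesis using M that by blast
qed

lemma norming_functional_exists:
  fixes z :: "'a::real_normed_vector"
  obtains h where "linear h" "\<And>x. \<bar>h x\<bar> \<le> norm x" "h z = norm z"
proof -
  let ?L = "{(t *\<^sub>R z, t * norm z) | t. True}"
  have "dominated_linear_graph ?L"
    unfolding dominated_linear_graph_def
  proof (intro conjI allI impI)
    show "(0, 0) \<in> ?L" by (auto intro: exI[of _ 0])
  next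
    fix x a y b assume "(x, a) \<in> ?L" "(y, b) \<in> ?L"
    then obtain s t where "x = s *\<^sub>R z" "a = s * norm z" "y = t *\<^sub>R z" "b = t * norm z" by blast
    then show "(x + y, a + b) \<in> ?L" by (auto simp: algebra_simps intro: exI[of _ "s + t"])
  next
    fix c x a assume "(x, a) \<in> ?L"
    then obtain t where "x = t *\<^sub>R z" "a = t * norm z" by blast
    then show "(c *\<^sub>R x, c * a) \<in> ?L" by (auto intro: exI[of _ "c * t"])
  next
    fix x a assume "(x, a) \<in> ?L"
    then show "a \<le> norm x" by (auto intro!: mult_right_mono)
  qed
  then obtain M where M: "dominated_linear_graph M" "(z, norm z) \<in> M" "\<And>w. \<exists>a. (w, a) \<in> M"
    by (rule dominated_linear_graph_maximal) force
  define h where "h x = (SOME a. (x, a) \<in> M)" for x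
  have hM: "(x, h x) \<in> M" for x unfolding h_def using M(3) by (rule someI_ex)
  have h_eq: "h x = a" if "(x, a) \<in> M" for x a
    using dominated_linear_graph_functional[OF M(1) hM that] .
  have "linear h"
    by (rule linearI) (use M(1) hM h_eq in \<open>auto simp: dominated_linear_graph_def\<close>)
  moreover have "h x \<le> norm x" for x using M(1) hM unfolding dominated_linear_graph_def by blast
  then have "\<bar>h x\<bar> \<le> norm x" for x
    using \<open>linear h\<close> by (metis abs_le_iff linear_neg norm_minus_cancel)
  ultimately show ?thesis using that h_eq[OF M(2)] by blast
qed

section \<open>Algebraic tensors and the projective norm\<close>

lemma sum_lessThan_add:
  "(\<Sum>i<n + m. (f :: nat \<Rightarrow> 'c::comm_monoid_add) i) = (\<Sum>i<n. f i) + (\<Sum>i<m. f (n + i))"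
  by (induction m) (auto simp: add.assoc)

lemma free_vs_zero: "(\<lambda>p. 0) \<in> free_vs"
  unfolding free_vs_def by simp

lemma free_vs_add: "v \<in> free_vs \<Longrightarrow> w \<in> free_vs \<Longrightarrow> (\<lambda>p. v p + w p) \<in> free_vs"
  unfolding free_vs_def by (auto intro: finite_subset[of _ "{p. v p \<noteq> 0} \<union> {p. w p \<noteq> 0}"])

lemma free_vs_scale: "w \<in> free_vs \<Longrightarrow> (\<lambda>p. c * w p) \<in> free_vs"
  unfolding free_vs_def by (auto intro: finite_subset[of _ "{p. w p \<noteq> 0}"])

lemma free_vs_diff: "v \<in> free_vs \<Longrightarrow> w \<in> free_vs \<Longrightarrow> (\<lambda>p. v p - w p) \<in> free_vs"
  using free_vs_add[of v "\<lambda>p. -1 * w p"] free_vs_scale[of w "-1"] by simp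

lemma free_vs_delta: "delta x y \<in> free_vs"
  unfolding free_vs_def delta_def by (auto intro: finite_subset[of _ "{(x, y)}"])

lemma free_vs_sum:
  "(\<And>i. i < n \<Longrightarrow> r i \<in> free_vs) \<Longrightarrow> (\<lambda>p. \<Sum>i<(n::nat). c i * r i p) \<in> free_vs"
  by (induction n) (simp_all add: free_vs_zero free_vs_add free_vs_scale)

lemma free_vs_sum_delta: "(\<lambda>p. \<Sum>i<(n::nat). delta (x i) (y i) p) \<in> free_vs"
proof -
  have "(\<lambda>p. \<Sum>i<n. 1 * delta (x i) (y i) p) \<in> free_vs"
    by (rule free_vs_sum) (rule free_vs_delta)
  then show ?thesis by simp
qed

lemma bilin_rels_free_vs: "r \<in> bilin_rels \<Longrightarrow> r \<in> free_vs"
  unfolding bilin_rels_def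
  by (elim UnE CollectE exE conjE) (simp_all add: free_vs_diff free_vs_delta free_vs_scale)

lemma tensor_null_free_vs: "w \<in> tensor_null \<Longrightarrow> w \<in> free_vs"
  unfolding tensor_null_def using free_vs_sum bilin_rels_free_vs by blast

lemma tensor_null_zero: "(\<lambda>p. 0) \<in> tensor_null"
  unfolding tensor_null_def by (intro CollectI exI[of _ 0]) simp

lemma tensor_null_rel: "r \<in> bilin_rels \<Longrightarrow> r \<in> tensor_null"
  unfolding tensor_null_def by (intro CollectI exI[of _ 1] exI[of _ "\<lambda>_. 1"] exI[of _ "\<lambda>_. r"]) simp

lemma tensor_null_add:
  assumes "v \<in> tensor_null" "w \<in> tensor_null"
  shows "(\<lambda>p. v p + w p) \<in> tensor_null"
proof -
  obtain n :: nat and c r where v: "\<forall>i<n. r i \<in> bilin_rels" "v = (\<lambda>p. \<Sum>i<n. c i * r i p)"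
    using assms(1) unfolding tensor_null_def by auto
  obtain m :: nat and d s where w: "\<forall>i<m. s i \<in> bilin_rels" "w = (\<lambda>p. \<Sum>i<m. d i * s i p)"
    using assms(2) unfolding tensor_null_def by auto
  define c' where "c' i = (if i < n then c i else d (i - n))" for i
  define r' where "r' i = (if i < n then r i else s (i - n))" for i
  have "\<forall>i<n + m. r' i \<in> bilin_rels" using v w unfolding r'_def by auto
  moreover have "(\<lambda>p. v p + w p) = (\<lambda>p. \<Sum>i<n + m. c' i * r' i p)"
    unfolding sum_lessThan_add v w c'_def r'_def by simp
  ultimately show ?thesis unfolding tensor_null_def by (intro CollectI exI conjI)
qed

lemma tensor_null_scale:
  assumes "w \<in> tensor_null"
  shows "(\<lambda>p. k * w p) \<in> tensor_null"
proof -
  obtain n :: nat and c r where w: "\<forall>i<n. r i \<in> bilin_rels" "w = (\<lambda>p. \<Sum>i<n. c i * r i p)"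
    using assms unfolding tensor_null_def by auto
  then have "(\<lambda>p. k * w p) = (\<lambda>p. \<Sum>i<n. (k * c i) * r i p)"
    by (simp add: sum_distrib_left mult.assoc)
  with w(1) show ?thesis unfolding tensor_null_def by (intro CollectI exI conjI)
qed

lemma tensor_null_sum:
  "(\<And>i. i < n \<Longrightarrow> r i \<in> tensor_null) \<Longrightarrow> (\<lambda>p. \<Sum>i<(n::nat). r i p) \<in> tensor_null"
  by (induction n) (simp_all add: tensor_null_zero tensor_null_add)

lemma tensor_null_scale_delta: "(\<lambda>p. c * delta x y p - delta (c *\<^sub>R x) y p) \<in> tensor_null"
proof -
  have "(\<lambda>p. delta (c *\<^sub>R x) y p - c * delta x y p) \<in> bilin_rels"
    unfolding bilin_rels_def by blast
  from tensor_null_scale[OF tensor_null_rel[OF this], of "-1"] show ?thesis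
    by (simp add: algebra_simps)
qed

definition represents :: "('a::real_vector \<times> 'b::real_vector \<Rightarrow> real) \<Rightarrow> nat \<Rightarrow> (nat \<Rightarrow> 'a) \<Rightarrow> (nat \<Rightarrow> 'b) \<Rightarrow> bool"
  where "represents w n x y \<longleftrightarrow> (\<lambda>p. w p - (\<Sum>i<n. delta (x i) (y i) p)) \<in> tensor_null"

lemma represents_delta: "represents (delta x y) 1 (\<lambda>_. x) (\<lambda>_. y)"
  unfolding represents_def using tensor_null_zero by simp

lemma represents_null: "w \<in> tensor_null \<Longrightarrow> represents w 0 x y"
  unfolding represents_def by simp

lemma represents_exists:
  fixes w :: "'a::real_vector \<times> 'b::real_vector \<Rightarrow> real"
  assumes "w \<in> free_vs"
  shows "\<exists>n x y. represents w n x y"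
proof -
  have "\<exists>n x y. represents w n x y" if "finite S" "{p. w p \<noteq> 0} \<subseteq> S" for S and w :: "'a \<times> 'b \<Rightarrow> real"
    using that
  proof (induction S arbitrary: w rule: finite_induct)
    case empty
    then have "w = (\<lambda>p. 0)" by auto
    then show ?case using represents_null[OF tensor_null_zero] by blast
  next
    case (insert q S)
    define w' where "w' p = w p - w q * delta (fst q) (snd q) p" for p
    have "{p. w' p \<noteq> 0} \<subseteq> S" using insert(2,4) unfolding w'_def delta_def by auto
    then obtain n x y where r: "represents w' n x y" using insert.IH by blast
    define x' where "x' i = (if i < n then x i else w q *\<^sub>R fst q)" for i
    define y' where "y' i = (if i < n then y i else snd q)" for i
    have eq: "(\<lambda>p. w p - (\<Sum>i<Suc n. delta (x' i) (y' i) p)) =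
        (\<lambda>p. (w' p - (\<Sum>i<n. delta (x i) (y i) p)) +
             (w q * delta (fst q) (snd q) p - delta (w q *\<^sub>R fst q) (snd q) p))"
      unfolding w'_def x'_def y'_def by (auto simp: algebra_simps)
    have "represents w (Suc n) x' y'"
      unfolding represents_def eq using r[unfolded represents_def]
      by (rule tensor_null_add) (rule tensor_null_scale_delta)
    then show ?case by blast
  qed
  then show ?thesis using assms unfolding free_vs_def by blast
qed

lemma represents_add:
  assumes "represents v n x y" "represents w m x' y'"
  shows "represents (\<lambda>p. v p + w p) (n + m)
           (\<lambda>i. if i < n then x i else x' (i - n)) (\<lambda>i. if i < n then y i else y' (i - n))"
proof -
  have "(\<lambda>p. (v p - (\<Sum>i<n. delta (x i) (y i) p)) + (w p - (\<Sum>i<m. delta (x' i) (y' i) p)))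
      \<in> tensor_null"
    using assms unfolding represents_def by (rule tensor_null_add)
  then show ?thesis unfolding represents_def sum_lessThan_add by (simp add: algebra_simps)
qed

lemma represents_scale:
  assumes "represents w n x y"
  shows "represents (\<lambda>p. c * w p) n (\<lambda>i. c *\<^sub>R x i) y"
proof -
  have "(\<lambda>p. c * (w p - (\<Sum>i<n. delta (x i) (y i) p)) +
        (\<Sum>i<n. c * delta (x i) (y i) p - delta (c *\<^sub>R x i) (y i) p)) \<in> tensor_null"
    using assms tensor_null_scale_delta unfolding represents_def
    by (intro tensor_null_add tensor_null_scale tensor_null_sum)
  then show ?thesis
    unfolding represents_def by (simp add: sum_subtractf right_diff_distrib sum_distrib_left)
qed

lemma proj_norm_represents:
  "proj_norm w = Inf {(\<Sum>i<n. norm (x i) * norm (y i)) | n x y. represents w n x y}"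
  unfolding proj_norm_def represents_def ..

lemma proj_norm_le:
  "represents w n x y \<Longrightarrow> proj_norm w \<le> (\<Sum>i<n. norm (x i) * norm (y i))"
  unfolding proj_norm_represents
  by (rule cInf_lower) (auto intro!: bdd_belowI[of _ 0] sum_nonneg)

lemma proj_norm_greatest:
  assumes "w \<in> free_vs" "\<And>n x y. represents w n x y \<Longrightarrow> r \<le> (\<Sum>i<n. norm (x i) * norm (y i))"
  shows "r \<le> proj_norm w"
  unfolding proj_norm_represents using assms represents_exists[OF assms(1)]
  by (intro cInf_greatest) auto

lemma proj_norm_less_represents:
  assumes "w \<in> free_vs" "proj_norm w < r"
  obtains n x y where "represents w n x y" "(\<Sum>i<n. norm (x i) * norm (y i)) < r"
  using cInf_lessD[OF _ assms(2)[unfolded proj_norm_represents]] represents_exists[OF assms(1)]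
  by blast

lemma proj_norm_nonneg: "w \<in> free_vs \<Longrightarrow> 0 \<le> proj_norm w"
  by (rule proj_norm_greatest) (auto intro: sum_nonneg)

lemma proj_norm_null: "w \<in> tensor_null \<Longrightarrow> proj_norm w = 0"
  using proj_norm_le[OF represents_null[of w "\<lambda>_. 0" "\<lambda>_. 0"]]
    proj_norm_nonneg[OF tensor_null_free_vs] by force

lemma proj_norm_zero: "proj_norm (\<lambda>p. 0) = 0"
  using proj_norm_null[OF tensor_null_zero] .

lemma proj_norm_delta: "proj_norm (delta x y) \<le> norm x * norm y"
  using proj_norm_le[OF represents_delta] by simp

lemma proj_norm_triangle:
  assumes "v \<in> free_vs" "w \<in> free_vs"
  shows "proj_norm (\<lambda>p. v p + w p) \<le> proj_norm v + proj_norm w"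
proof (rule field_le_epsilon)
  fix e :: real assume "e > 0"
  obtain n x y where v: "represents v n x y" "(\<Sum>i<n. norm (x i) * norm (y i)) < proj_norm v + e/2"
    using proj_norm_less_represents[OF assms(1)] \<open>e > 0\<close> by (metis less_add_same_cancel1 half_gt_zero)
  obtain m x' y' where w: "represents w m x' y'" "(\<Sum>i<m. norm (x' i) * norm (y' i)) < proj_norm w + e/2"
    using proj_norm_less_represents[OF assms(2)] \<open>e > 0\<close> by (metis less_add_same_cancel1 half_gt_zero)
  have "proj_norm (\<lambda>p. v p + w p)
      \<le> (\<Sum>i<n. norm (x i) * norm (y i)) + (\<Sum>i<m. norm (x' i) * norm (y' i))"
    using proj_norm_le[OF represents_add[OF v(1) w(1)]] unfolding sum_lessThan_add by simp
  then show "proj_norm (\<lambda>p. v p + w p) \<le> proj_norm v + proj_norm w + e"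
    using v(2) w(2) by linarith
qed

lemma proj_norm_scale:
  assumes "w \<in> free_vs"
  shows "proj_norm (\<lambda>p. c * w p) \<le> \<bar>c\<bar> * proj_norm w"
proof (cases "c = 0")
  case True
  then show ?thesis by (simp add: proj_norm_zero)
next
  case False
  have "proj_norm (\<lambda>p. c * w p) / \<bar>c\<bar> \<le> proj_norm w"
  proof (rule proj_norm_greatest[OF assms])
    fix n x y assume "represents w n x y"
    then have "proj_norm (\<lambda>p. c * w p) \<le> (\<Sum>i<n. norm (c *\<^sub>R x i) * norm (y i))"
      by (rule proj_norm_le[OF represents_scale])
    also have "\<dots> = \<bar>c\<bar> * (\<Sum>i<n. norm (x i) * norm (y i))"
      by (simp add: sum_distrib_left mult.assoc)
    finally show "proj_norm (\<lambda>p. c * w p) / \<bar>c\<bar> \<le> (\<Sum>i<n. norm (x i) * norm (y i))"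
      using False by (simp add: field_simps)
  qed
  then show ?thesis using False by (simp add: field_simps)
qed

lemma proj_norm_minus_commute:
  assumes "v \<in> free_vs" "w \<in> free_vs"
  shows "proj_norm (\<lambda>p. v p - w p) = proj_norm (\<lambda>p. w p - v p)"
  using proj_norm_scale[OF free_vs_diff[OF assms], of "-1"]
    proj_norm_scale[OF free_vs_diff[OF assms(2,1)], of "-1"] by simp

lemma proj_norm_diff_abs:
  assumes "v \<in> free_vs" "w \<in> free_vs"
  shows "\<bar>proj_norm v - proj_norm w\<bar> \<le> proj_norm (\<lambda>p. v p - w p)"
  using proj_norm_triangle[OF free_vs_diff[OF assms] assms(2)]
    proj_norm_triangle[OF free_vs_diff[OF assms(2,1)] assms(1)]
    proj_norm_minus_commute[OF assms] by simp

definition tensor_functional :: "('a \<Rightarrow> 'b \<Rightarrow> real) \<Rightarrow> ('a \<times> 'b \<Rightarrow> real) \<Rightarrow> real" where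
  "tensor_functional B w = (\<Sum>p\<in>{p. w p \<noteq> 0}. w p * B (fst p) (snd p))"

lemma tensor_functional_superset:
  assumes "finite S" "{p. w p \<noteq> 0} \<subseteq> S"
  shows "tensor_functional B w = (\<Sum>p\<in>S. w p * B (fst p) (snd p))"
  unfolding tensor_functional_def using assms by (intro sum.mono_neutral_left) auto

lemma tensor_functional_add:
  assumes "v \<in> free_vs" "w \<in> free_vs"
  shows "tensor_functional B (\<lambda>p. v p + w p) = tensor_functional B v + tensor_functional B w"
proof -
  let ?S = "{p. v p \<noteq> 0} \<union> {p. w p \<noteq> 0}"
  have "finite ?S" using assms unfolding free_vs_def by auto
  then show ?thesis
    by (subst (1 2 3) tensor_functional_superset[of ?S]) (auto simp: distrib_right sum.distrib)
qed

lemma tensor_functional_scale: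
  assumes "w \<in> free_vs"
  shows "tensor_functional B (\<lambda>p. c * w p) = c * tensor_functional B w"
proof -
  have "finite {p. w p \<noteq> 0}" using assms unfolding free_vs_def by auto
  then show ?thesis
    by (subst (1 2) tensor_functional_superset[of "{p. w p \<noteq> 0}"])
      (auto simp: sum_distrib_left mult.assoc)
qed

lemma tensor_functional_diff:
  assumes "v \<in> free_vs" "w \<in> free_vs"
  shows "tensor_functional B (\<lambda>p. v p - w p) = tensor_functional B v - tensor_functional B w"
  using tensor_functional_add[OF assms(1) free_vs_scale[OF assms(2)], of B "-1"]
    tensor_functional_scale[OF assms(2), of B "-1"] by simp

lemma tensor_functional_delta: "tensor_functional B (delta x y) = B x y"
  by (subst tensor_functional_superset[of "{(x, y)}"]) (auto simp: delta_def)

lemma tensor_functional_sum: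
  assumes "\<And>i. i < n \<Longrightarrow> r i \<in> free_vs"
  shows "tensor_functional B (\<lambda>p. \<Sum>i<(n::nat). c i * r i p) = (\<Sum>i<n. c i * tensor_functional B (r i))"
  using assms
proof (induction n)
  case 0
  show ?case by (simp add: tensor_functional_def)
next
  case (Suc n)
  then show ?case
    by (simp add: tensor_functional_add tensor_functional_scale free_vs_sum free_vs_scale)
qed

lemma tensor_functional_null:
  assumes "bilinear B" "w \<in> tensor_null"
  shows "tensor_functional B w = 0"
proof -
  have "tensor_functional B r = 0" if "r \<in> bilin_rels" for r
    using that assms(1)
    by (auto simp: bilin_rels_def tensor_functional_diff tensor_functional_scale
        tensor_functional_delta free_vs_diff free_vs_scale free_vs_delta
        bilinear_ladd bilinear_radd bilinear_lmul bilinear_rmul)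
  moreover obtain n :: nat and c r where "\<forall>i<n. r i \<in> bilin_rels" "w = (\<lambda>p. \<Sum>i<n. c i * r i p)"
    using assms(2) unfolding tensor_null_def by auto
  ultimately show ?thesis by (simp add: tensor_functional_sum bilin_rels_free_vs)
qed

lemma tensor_functional_represents:
  assumes "bilinear B" "w \<in> free_vs" "represents w n x y"
  shows "tensor_functional B w = (\<Sum>i<n. B (x i) (y i))"
proof -
  have "tensor_functional B (\<lambda>p. w p - (\<Sum>i<n. delta (x i) (y i) p)) = 0"
    using tensor_functional_null[OF assms(1)] assms(3) unfolding represents_def by blast
  then show ?thesis
    using tensor_functional_sum[of n "\<lambda>i. delta (x i) (y i)" B "\<lambda>_. 1"]
    by (simp add: tensor_functional_diff[OF assms(2) free_vs_sum_delta]
        tensor_functional_delta free_vs_delta)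
qed

lemma tensor_functional_le_proj_norm:
  assumes "bilinear B" "\<And>x y. B x y \<le> norm x * norm y" "w \<in> free_vs"
  shows "tensor_functional B w \<le> proj_norm w"
proof (rule proj_norm_greatest[OF assms(3)])
  fix n x y assume "represents w n x y"
  then show "tensor_functional B w \<le> (\<Sum>i<n. norm (x i) * norm (y i))"
    using assms by (simp add: tensor_functional_represents sum_mono)
qed

section \<open>The completion\<close>

abbreviation ptensor :: "(nat \<Rightarrow> 'a::real_normed_vector \<times> 'b::real_normed_vector \<Rightarrow> real) nspace"
  where "ptensor \<equiv> proj_tensor TYPE('a) TYPE('b)"

lemma in_ptensor_iff:
  "s \<in> carrier ptensor \<longleftrightarrow> (\<forall>n. s n \<in> free_vs) \<and>
     (\<forall>e>0. \<exists>M. \<forall>m\<ge>M. \<forall>n\<ge>M. proj_norm (\<lambda>p. s m p - s n p) < e)"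
  by (simp add: proj_tensor_def)

lemma ptensor_ops [simp]:
  "vadd ptensor = (\<lambda>s t n p. s n p + t n p)"
  "vscale ptensor = (\<lambda>c s n p. c * s n p)"
  "vzero ptensor = (\<lambda>n p. 0)"
  "vnorm ptensor = (\<lambda>s. lim (\<lambda>n. proj_norm (s n)))"
  by (simp_all add: proj_tensor_def)

lemma ptensor_free_vs: "s \<in> carrier ptensor \<Longrightarrow> s n \<in> free_vs"
  by (simp add: in_ptensor_iff)

lemma ptensor_Cauchy:
  "s \<in> carrier ptensor \<Longrightarrow> e > 0 \<Longrightarrow> \<exists>M. \<forall>m\<ge>M. \<forall>n\<ge>M. proj_norm (\<lambda>p. s m p - s n p) < e"
  by (simp add: in_ptensor_iff)

lemma ptensor_norm_tendsto:
  assumes s: "s \<in> carrier ptensor"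
  shows "(\<lambda>n. proj_norm (s n)) \<longlonglongrightarrow> vnorm ptensor s"
proof -
  have "Cauchy (\<lambda>n. proj_norm (s n))"
  proof (rule metric_CauchyI)
    fix e :: real assume "e > 0"
    then obtain M where "\<forall>m\<ge>M. \<forall>n\<ge>M. proj_norm (\<lambda>p. s m p - s n p) < e"
      using ptensor_Cauchy[OF s] by blast
    moreover have "dist (proj_norm (s m)) (proj_norm (s n)) \<le> proj_norm (\<lambda>p. s m p - s n p)" for m n
      unfolding dist_real_def by (rule proj_norm_diff_abs[OF ptensor_free_vs[OF s] ptensor_free_vs[OF s]])
    ultimately show "\<exists>M. \<forall>m\<ge>M. \<forall>n\<ge>M. dist (proj_norm (s m)) (proj_norm (s n)) < e"
      by (meson le_less_trans)
  qed
  then show ?thesis using Cauchy_convergent by (simp add: convergent_LIMSEQ_iff)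
qed

lemma const_in_ptensor: "w \<in> free_vs \<Longrightarrow> (\<lambda>_. w) \<in> carrier ptensor"
  by (simp add: in_ptensor_iff proj_norm_zero)

lemma vnorm_ptensor_const: "vnorm ptensor (\<lambda>_. w) = proj_norm w"
  by (simp add: limI)

lemma ptensor_add_closed:
  assumes s: "s \<in> carrier ptensor" and t: "t \<in> carrier ptensor"
  shows "(\<lambda>n p. s n p + t n p) \<in> carrier ptensor"
  unfolding in_ptensor_iff
proof (intro conjI allI impI)
  show "(\<lambda>p. s n p + t n p) \<in> free_vs" for n
    using s t by (simp add: ptensor_free_vs free_vs_add)
next
  fix e :: real assume "e > 0"
  obtain M1 where M1: "\<forall>m\<ge>M1. \<forall>n\<ge>M1. proj_norm (\<lambda>p. s m p - s n p) < e/2"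
    using ptensor_Cauchy[OF s] \<open>e > 0\<close> by (meson half_gt_zero)
  obtain M2 where M2: "\<forall>m\<ge>M2. \<forall>n\<ge>M2. proj_norm (\<lambda>p. t m p - t n p) < e/2"
    using ptensor_Cauchy[OF t] \<open>e > 0\<close> by (meson half_gt_zero)
  have "proj_norm (\<lambda>p. s m p + t m p - (s n p + t n p)) < e" if "max M1 M2 \<le> m" "max M1 M2 \<le> n" for m n
  proof -
    have "(\<lambda>p. s m p + t m p - (s n p + t n p)) = (\<lambda>p. (s m p - s n p) + (t m p - t n p))"
      by (simp add: algebra_simps)
    then have "proj_norm (\<lambda>p. s m p + t m p - (s n p + t n p))
        \<le> proj_norm (\<lambda>p. s m p - s n p) + proj_norm (\<lambda>p. t m p - t n p)"
      using s t by (simp add: proj_norm_triangle free_vs_diff ptensor_free_vs)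
    moreover have "proj_norm (\<lambda>p. s m p - s n p) < e/2" "proj_norm (\<lambda>p. t m p - t n p) < e/2"
      using M1 M2 that by auto
    ultimately show ?thesis by linarith
  qed
  then show "\<exists>M. \<forall>m\<ge>M. \<forall>n\<ge>M. proj_norm (\<lambda>p. s m p + t m p - (s n p + t n p)) < e"
    by blast
qed

lemma ptensor_scale_closed:
  assumes s: "s \<in> carrier ptensor"
  shows "(\<lambda>n p. c * s n p) \<in> carrier ptensor"
  unfolding in_ptensor_iff
proof (intro conjI allI impI)
  show "(\<lambda>p. c * s n p) \<in> free_vs" for n
    using s by (simp add: ptensor_free_vs free_vs_scale)
next
  fix e :: real assume "e > 0"
  then obtain M where M: "\<forall>m\<ge>M. \<forall>n\<ge>M. proj_norm (\<lambda>p. s m p - s n p) < e / (\<bar>c\<bar> + 1)"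
    using ptensor_Cauchy[OF s, of "e / (\<bar>c\<bar> + 1)"] by (auto simp: add_nonneg_pos)
  have "proj_norm (\<lambda>p. c * s m p - c * s n p) < e" if "M \<le> m" "M \<le> n" for m n
  proof -
    have "proj_norm (\<lambda>p. c * s m p - c * s n p) \<le> \<bar>c\<bar> * proj_norm (\<lambda>p. s m p - s n p)"
      using proj_norm_scale[OF free_vs_diff[OF ptensor_free_vs[OF s] ptensor_free_vs[OF s]]]
      by (simp add: right_diff_distrib)
    also have "\<dots> \<le> \<bar>c\<bar> * (e / (\<bar>c\<bar> + 1))"
      using M that by (intro mult_left_mono) (auto intro: less_imp_le)
    also have "\<dots> < e" using \<open>e > 0\<close> by (simp add: field_simps)
    finally show ?thesis .
  qed
  then show "\<exists>M. \<forall>m\<ge>M. \<forall>n\<ge>M. proj_norm (\<lambda>p. c * s m p - c * s n p) < e"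
    by blast
qed

lemma ptensor_norm_triangle:
  assumes "s \<in> carrier ptensor" "t \<in> carrier ptensor"
  shows "vnorm ptensor (\<lambda>n p. s n p + t n p) \<le> vnorm ptensor s + vnorm ptensor t"
  using assms
  by (intro LIMSEQ_le[OF ptensor_norm_tendsto[OF ptensor_add_closed[OF assms]]
        tendsto_add[OF ptensor_norm_tendsto ptensor_norm_tendsto]])
    (auto intro: proj_norm_triangle ptensor_free_vs)

lemma ptensor_norm_scale:
  assumes "s \<in> carrier ptensor"
  shows "vnorm ptensor (\<lambda>n p. c * s n p) \<le> \<bar>c\<bar> * vnorm ptensor s"
  using assms
  by (intro LIMSEQ_le[OF ptensor_norm_tendsto[OF ptensor_scale_closed[OF assms]]
        tendsto_mult[OF tendsto_const ptensor_norm_tendsto]])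
    (auto intro: proj_norm_scale ptensor_free_vs)

lemma ptensor_norm_nonneg: "s \<in> carrier ptensor \<Longrightarrow> 0 \<le> vnorm ptensor s"
  by (rule LIMSEQ_le_const[OF ptensor_norm_tendsto]) (auto intro: proj_norm_nonneg ptensor_free_vs)

lemma lincomb_ptensor: "lincomb ptensor n l u = (\<lambda>m p. \<Sum>i<n. l i * u i m p)"
  by (induction n) auto

lemma lincomb_ptensor_closed:
  "(\<And>i. i < n \<Longrightarrow> u i \<in> carrier ptensor) \<Longrightarrow> lincomb ptensor n l u \<in> carrier ptensor"
proof (induction n)
  case 0
  show ?case using const_in_ptensor[OF free_vs_zero] by simp
next
  case (Suc n)
  then show ?case by (simp add: ptensor_add_closed ptensor_scale_closed)
qed

lemma lincomb_ptensor_norm_le: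
  assumes "\<And>i. i < n \<Longrightarrow> u i \<in> carrier ptensor" "\<And>i. i < n \<Longrightarrow> 0 \<le> l i"
  shows "vnorm ptensor (lincomb ptensor n l u) \<le> (\<Sum>i<n. l i * vnorm ptensor (u i))"
  using assms
proof (induction n)
  case 0
  show ?case using vnorm_ptensor_const[of "\<lambda>p. 0"] by (simp add: proj_norm_zero)
next
  case (Suc n)
  have u: "u n \<in> carrier ptensor" and l: "0 \<le> l n" using Suc.prems by auto
  have "vnorm ptensor (lincomb ptensor (Suc n) l u)
      \<le> vnorm ptensor (lincomb ptensor n l u) + vnorm ptensor (\<lambda>m p. l n * u n m p)"
    using ptensor_norm_triangle[OF lincomb_ptensor_closed ptensor_scale_closed[OF u]] Suc.prems
    by simp
  also have "\<dots> \<le> (\<Sum>i<n. l i * vnorm ptensor (u i)) + l n * vnorm ptensor (u n)"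
    using Suc ptensor_norm_scale[OF u, of "l n"] l by (intro add_mono) auto
  finally show ?case by simp
qed

lemma ptensor_norm_diff_le:
  assumes "s \<in> carrier ptensor" "t \<in> carrier ptensor"
  shows "vnorm ptensor (vadd ptensor s (vscale ptensor (-1) t)) \<le> vnorm ptensor s + vnorm ptensor t"
proof -
  have eq: "vadd ptensor s (vscale ptensor (-1) t) = (\<lambda>n p. s n p + (\<lambda>n p. -1 * t n p) n p)"
    by simp
  have "vnorm ptensor (vadd ptensor s (vscale ptensor (-1) t))
      \<le> vnorm ptensor s + vnorm ptensor (\<lambda>n p. -1 * t n p)"
    unfolding eq by (rule ptensor_norm_triangle[OF assms(1) ptensor_scale_closed[OF assms(2)]])
  also have "vnorm ptensor (\<lambda>n p. -1 * t n p) \<le> vnorm ptensor t"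
    using ptensor_norm_scale[OF assms(2), of "-1"] by simp
  finally show ?thesis by simp
qed

section \<open>Norm-one functionals on the completed tensor product\<close>

locale ptensor_dual_unit =
  fixes f :: "(nat \<Rightarrow> 'a::real_normed_vector \<times> 'b::real_normed_vector \<Rightarrow> real) \<Rightarrow> real"
  assumes dual_unit: "dual_unit ptensor f"
begin

lemma f_add: "u \<in> carrier ptensor \<Longrightarrow> v \<in> carrier ptensor \<Longrightarrow> f (\<lambda>n p. u n p + v n p) = f u + f v"
  using dual_unit unfolding dual_unit_def by simp

lemma f_scale: "v \<in> carrier ptensor \<Longrightarrow> f (\<lambda>n p. c * v n p) = c * f v"
  using dual_unit unfolding dual_unit_def by simp

lemma f_SUP: "(SUP v\<in>{v \<in> carrier ptensor. vnorm ptensor v \<le> 1}. f v) = 1"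
  using dual_unit unfolding dual_unit_def by blast

lemma f_bounded:
  obtains K where "K \<ge> 0" "\<And>v. v \<in> carrier ptensor \<Longrightarrow> \<bar>f v\<bar> \<le> K * vnorm ptensor v"
proof -
  obtain K where K: "\<And>v. v \<in> carrier ptensor \<Longrightarrow> \<bar>f v\<bar> \<le> K * vnorm ptensor v"
    using dual_unit unfolding dual_unit_def by blast
  have "\<bar>f v\<bar> \<le> \<bar>K\<bar> * vnorm ptensor v" if "v \<in> carrier ptensor" for v
    using K[OF that] mult_right_mono[OF abs_ge_self ptensor_norm_nonneg[OF that], of K] by linarith
  then show ?thesis using that[of "\<bar>K\<bar>"] by simp
qed

definition alg :: "('a \<times> 'b \<Rightarrow> real) \<Rightarrow> real" where
  "alg w = f (\<lambda>_. w)"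

lemma alg_add: "v \<in> free_vs \<Longrightarrow> w \<in> free_vs \<Longrightarrow> alg (\<lambda>p. v p + w p) = alg v + alg w"
  unfolding alg_def using f_add[OF const_in_ptensor const_in_ptensor] by simp

lemma alg_scale: "w \<in> free_vs \<Longrightarrow> alg (\<lambda>p. c * w p) = c * alg w"
  unfolding alg_def using f_scale[OF const_in_ptensor] by simp

lemma alg_bounded:
  obtains K where "K \<ge> 0" "\<And>w. w \<in> free_vs \<Longrightarrow> \<bar>alg w\<bar> \<le> K * proj_norm w"
  using f_bounded const_in_ptensor vnorm_ptensor_const unfolding alg_def by metis

lemma alg_null: "w \<in> tensor_null \<Longrightarrow> alg w = 0"
  using alg_bounded tensor_null_free_vs proj_norm_null
  by (metis abs_le_zero_iff mult_zero_right)

lemma alg_cong: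
  assumes "v \<in> free_vs" "w \<in> free_vs" "(\<lambda>p. v p - w p) \<in> tensor_null"
  shows "alg v = alg w"
  using alg_add[OF free_vs_diff[OF assms(1,2)] assms(2)] alg_null[OF assms(3)] by simp

definition form :: "'a \<Rightarrow> 'b \<Rightarrow> real" where
  "form x y = alg (delta x y)"

lemma alg_sum_delta: "alg (\<lambda>p. \<Sum>i<(n::nat). delta (x i) (y i) p) = (\<Sum>i<n. form (x i) (y i))"
  by (induction n) (simp_all add: alg_null[OF tensor_null_zero] alg_add free_vs_sum_delta
      free_vs_delta form_def)

lemma form_bounded_bilinear: "bounded_bilinear form"
proof
  have rel: "alg v = alg w" if "(\<lambda>p. v p - w p) \<in> bilin_rels" "v \<in> free_vs" "w \<in> free_vs" for v w
    using that by (intro alg_cong tensor_null_rel)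
  show "form (x + x') y = form x y + form x' y" for x x' y
    using rel[of "delta (x + x') y" "\<lambda>p. delta x y p + delta x' y p"]
    unfolding form_def bilin_rels_def
    by (simp add: alg_add free_vs_add free_vs_delta diff_diff_eq) blast
  show "form x (y + y') = form x y + form x y'" for x y y'
    using rel[of "delta x (y + y')" "\<lambda>p. delta x y p + delta x y' p"]
    unfolding form_def bilin_rels_def
    by (simp add: alg_add free_vs_add free_vs_delta diff_diff_eq) blast
  show "form (c *\<^sub>R x) y = c *\<^sub>R form x y" for c x y
    using rel[of "delta (c *\<^sub>R x) y" "\<lambda>p. c * delta x y p"]
    unfolding form_def bilin_rels_def
    by (simp add: alg_scale free_vs_scale free_vs_delta) blast
  show "form x (c *\<^sub>R y) = c *\<^sub>R form x y" for c x y
    using rel[of "delta x (c *\<^sub>R y)" "\<lambda>p. c * delta x y p"]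
    unfolding form_def bilin_rels_def
    by (simp add: alg_scale free_vs_scale free_vs_delta) blast
  obtain K where "K \<ge> 0" "\<And>w. w \<in> free_vs \<Longrightarrow> \<bar>alg w\<bar> \<le> K * proj_norm w"
    using alg_bounded by blast
  then have "\<bar>form x y\<bar> \<le> norm x * norm y * K" for x y
    unfolding form_def using proj_norm_delta[of x y] free_vs_delta[of x y]
    by (metis mult.commute mult_left_mono order_trans)
  then show "\<exists>K. \<forall>x y. norm (form x y) \<le> norm x * norm y * K"
    by auto
qed

lemma form_le_scaled:
  assumes "\<And>x y. norm x \<le> 1 \<Longrightarrow> norm y \<le> 1 \<Longrightarrow> form x y \<le> t" "t \<ge> 0"
  shows "form x y \<le> norm x * norm y * t"
proof -
  have norm_sgn_scale: "norm z *\<^sub>R sgn z = z" for z :: "'c::real_normed_vector"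
    by (cases "z = 0") (simp_all add: sgn_div_norm)
  have "form x y = form (norm x *\<^sub>R sgn x) (norm y *\<^sub>R sgn y)"
    by (simp only: norm_sgn_scale)
  also have "\<dots> = norm x * norm y * form (sgn x) (sgn y)"
    by (simp add: bounded_bilinear.scaleR_left[OF form_bounded_bilinear]
        bounded_bilinear.scaleR_right[OF form_bounded_bilinear])
  also have "\<dots> \<le> norm x * norm y * t"
    using assms(1)[of "sgn x" "sgn y"] by (intro mult_left_mono) (auto simp: norm_sgn)
  finally show ?thesis .
qed

lemma algebraic_approximation:
  assumes v: "v \<in> carrier ptensor" and "e > 0"
  obtains w where "w \<in> free_vs" "proj_norm w < vnorm ptensor v + e" "\<bar>f v - alg w\<bar> < e"
proof -
  obtain K where K: "K \<ge> 0" "\<And>u. u \<in> carrier ptensor \<Longrightarrow> \<bar>f u\<bar> \<le> K * vnorm ptensor u"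
    using f_bounded by blast
  define d where "d = e / (K + 1)"
  have d: "d > 0" "K * d < e" using K(1) \<open>e > 0\<close> unfolding d_def by (auto simp: field_simps)
  obtain M where M: "\<forall>k\<ge>M. \<forall>m\<ge>M. proj_norm (\<lambda>p. v k p - v m p) < d"
    using ptensor_Cauchy[OF v d(1)] by blast
  obtain N where N: "\<forall>m\<ge>N. proj_norm (v m) < vnorm ptensor v + e"
    using order_tendstoD(2)[OF ptensor_norm_tendsto[OF v], of "vnorm ptensor v + e"] \<open>e > 0\<close>
    unfolding eventually_sequentially by auto
  define m where "m = max M N"
  define r where "r = (\<lambda>k p. v k p + -1 * v m p)"
  have r: "r \<in> carrier ptensor"
    unfolding r_def by (intro ptensor_add_closed[OF v] ptensor_scale_closed const_in_ptensor ptensor_free_vs[OF v])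
  have vm: "(\<lambda>_. v m) \<in> carrier ptensor" by (rule const_in_ptensor[OF ptensor_free_vs[OF v]])
  have "f r = f v - alg (v m)"
    unfolding r_def alg_def
    using f_add[OF v ptensor_scale_closed[OF vm, of "-1"]] f_scale[OF vm, of "-1"] by simp
  moreover have "vnorm ptensor r \<le> d"
  proof (rule LIMSEQ_le_const2[OF ptensor_norm_tendsto[OF r]])
    have "proj_norm (r k) \<le> d" if "k \<ge> M" for k
    proof -
      have "r k = (\<lambda>p. v k p - v m p)" unfolding r_def by simp
      then show ?thesis using M that unfolding m_def by (simp add: less_imp_le)
    qed
    then show "\<exists>N. \<forall>k\<ge>N. proj_norm (r k) \<le> d" by blast
  qed
  ultimately have "\<bar>f v - alg (v m)\<bar> \<le> K * d"
    using K(2)[OF r] mult_left_mono[OF _ K(1), of "vnorm ptensor r" d] by simp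
  then have "\<bar>f v - alg (v m)\<bar> < e" using d(2) by linarith
  moreover have "proj_norm (v m) < vnorm ptensor v + e" using N unfolding m_def by simp
  ultimately show ?thesis using that ptensor_free_vs[OF v] by blast
qed

text \<open>Otherwise f would be at most 1 - \<alpha> on all elementary tensors of the unit ball, hence on the
  projective unit ball, whose algebraic elements have representations of cost close to their norm.\<close>
lemma slice_contains_elementary:
  assumes "0 < \<alpha>" "\<alpha> < 1"
  shows "\<exists>x y. norm x \<le> 1 \<and> norm y \<le> 1 \<and> form x y > 1 - \<alpha>"
proof (rule ccontr)
  assume "\<not> ?thesis"
  then have le: "form x y \<le> 1 - \<alpha>" if "norm x \<le> 1" "norm y \<le> 1" for x y
    using that by (meson not_le)
  let ?B = "{v \<in> carrier ptensor. vnorm ptensor v \<le> 1} :: (nat \<Rightarrow> 'a \<times> 'b \<Rightarrow> real) set"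
  obtain K where K: "K \<ge> 0" "\<And>v. v \<in> carrier ptensor \<Longrightarrow> \<bar>f v\<bar> \<le> K * vnorm ptensor v"
    using f_bounded by blast
  have zero: "(\<lambda>_ p. 0) \<in> ?B"
    using const_in_ptensor[OF free_vs_zero] vnorm_ptensor_const[of "\<lambda>p. 0"] by (simp add: proj_norm_zero)
  have bdd: "bdd_above (f ` ?B)"
  proof (rule bdd_aboveI2)
    fix v assume "v \<in> ?B"
    then have "\<bar>f v\<bar> \<le> K * vnorm ptensor v" "K * vnorm ptensor v \<le> K"
      using K by (auto simp: mult_left_le)
    then show "f v \<le> K" by linarith
  qed
  have "1 - \<alpha> < (SUP v\<in>?B. f v)" using f_SUP \<open>0 < \<alpha>\<close> by simp
  then obtain v where v: "v \<in> carrier ptensor" "vnorm ptensor v \<le> 1" "1 - \<alpha> < f v"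
    using less_cSUP_iff[OF _ bdd] zero by blast
  define \<gamma> where "\<gamma> = f v - (1 - \<alpha>)"
  have "\<gamma> > 0" using v(3) unfolding \<gamma>_def by simp
  then obtain w where w: "w \<in> free_vs" "proj_norm w < 1 + \<gamma>/2" "\<bar>f v - alg w\<bar> < \<gamma>/2"
    using algebraic_approximation[OF v(1), of "\<gamma>/2"] v(2) by force
  obtain n x y where xy: "represents w n x y" "(\<Sum>i<n. norm (x i) * norm (y i)) < 1 + \<gamma>/2"
    using proj_norm_less_represents[OF w(1,2)] by blast
  have "alg w = alg (\<lambda>p. \<Sum>i<n. delta (x i) (y i) p)"
    using xy(1) unfolding represents_def by (intro alg_cong w(1) free_vs_sum_delta)
  also have "\<dots> \<le> (\<Sum>i<n. norm (x i) * norm (y i) * (1 - \<alpha>))"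
    unfolding alg_sum_delta using form_le_scaled[OF le] assms by (intro sum_mono) auto
  also have "\<dots> = (\<Sum>i<n. norm (x i) * norm (y i)) * (1 - \<alpha>)"
    by (simp add: sum_distrib_right)
  also have "\<dots> \<le> (1 + \<gamma>/2) * (1 - \<alpha>)"
    using xy(2) assms by (intro mult_right_mono) auto
  also have "\<dots> \<le> 1 - \<alpha> + \<gamma>/2"
    using assms \<open>\<gamma> > 0\<close> by (simp add: algebra_simps)
  finally have "alg w \<le> 1 - \<alpha> + \<gamma>/2" .
  moreover have "f v - alg w < \<gamma>/2" using w(3) by linarith
  ultimately show False by (simp add: \<gamma>_def field_simps)
qed

lemma delta_in_slice:
  assumes "norm x \<le> 1" "norm y \<le> 1" "form x y > 1 - \<alpha>"
  shows "(\<lambda>_. delta x y) \<in> slice ptensor f \<alpha>"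
proof -
  have "proj_norm (delta x y) \<le> 1"
    using proj_norm_delta[of x y] mult_le_one[OF assms(1) norm_ge_zero assms(2)] by linarith
  then show ?thesis
    using assms(3) const_in_ptensor[OF free_vs_delta]
    unfolding slice_def vnorm_ptensor_const form_def alg_def by simp
qed

end

section \<open>The strong diameter two property\<close>

lemma normed_space_of_simps [simp]:
  "carrier (normed_space_of TYPE('c::real_normed_vector)) = UNIV"
  "vadd (normed_space_of TYPE('c)) = (+)"
  "vscale (normed_space_of TYPE('c)) = (*\<^sub>R)"
  "vzero (normed_space_of TYPE('c)) = 0"
  "vnorm (normed_space_of TYPE('c)) = norm"
  by (simp_all add: normed_space_of_def)

lemma lincomb_normed_space_of:
  "lincomb (normed_space_of TYPE('c::real_normed_vector)) n l x = (\<Sum>i<n. l i *\<^sub>R x i)"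
  by (induction n) simp_all

lemma cSUP_divide_pos:
  fixes g :: "'c \<Rightarrow> real"
  assumes "A \<noteq> {}" "bdd_above (g ` A)" "s > 0"
  shows "(SUP x\<in>A. g x / s) = (SUP x\<in>A. g x) / s"
proof -
  have "continuous (at_left (Sup (g ` A))) (\<lambda>y. y / s)"
    using \<open>s > 0\<close> by (intro continuous_intros) simp
  then have "(\<lambda>y. y / s) (Sup (g ` A)) = (SUP y\<in>g ` A. y / s)"
    using assms by (intro continuous_at_Sup_mono) (auto simp: mono_def divide_right_mono)
  then show ?thesis by (simp add: image_image)
qed

lemma bounded_linear_bdd_above_ball:
  fixes g :: "'c::real_normed_vector \<Rightarrow> real"
  assumes "bounded_linear g"
  shows "bdd_above (g ` {x. norm x \<le> 1})"
proof -
  obtain K where K: "\<And>x. \<bar>g x\<bar> \<le> norm x * K" "K > 0"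
    using bounded_linear.pos_bounded[OF assms] by auto
  have "g x \<le> K" if "norm x \<le> 1" for x
    using K(1)[of x] mult_right_mono[OF that, of K] K(2) by linarith
  then show ?thesis by (intro bdd_aboveI2[of _ _ K]) auto
qed

lemma dual_unit_normalize:
  fixes g :: "'c::real_normed_vector \<Rightarrow> real"
  assumes g: "bounded_linear g" and s: "s = (SUP x\<in>{x. norm x \<le> 1}. g x)" "s > 0"
  shows "dual_unit (normed_space_of TYPE('c)) (\<lambda>x. g x / s)"
proof -
  obtain K where K: "\<And>x. \<bar>g x\<bar> \<le> norm x * K"
    using bounded_linear.pos_bounded[OF g] by auto
  have "{x. norm x \<le> 1} \<noteq> {}" by (auto intro: exI[of _ 0])
  then have "(SUP x\<in>{x. norm x \<le> 1}. g x / s) = 1"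
    using cSUP_divide_pos[OF _ bounded_linear_bdd_above_ball[OF g] s(2)] s by simp
  moreover have "\<bar>g x / s\<bar> \<le> K / s * norm x" for x
    using K[of x] s(2) by (simp add: divide_right_mono field_simps)
  ultimately show ?thesis
    unfolding dual_unit_def
    by (auto intro!: exI[of _ "K / s"] simp: linear_add[OF bounded_linear.linear[OF g]]
        linear_scale[OF bounded_linear.linear[OF g]] add_divide_distrib)
qed

text \<open>The slices {x. g i x > t i} of the unit ball are slices of the norm-one functionals
  g i / (sup of g i over the ball), so SD2P applies to them.\<close>
lemma SD2P_slices_diameter:
  fixes g :: "nat \<Rightarrow> 'c::real_normed_vector \<Rightarrow> real"
  assumes SD: "SD2P (normed_space_of TYPE('c))"
    and n: "n > 0" and l: "\<forall>i<n. 0 \<le> l i" "(\<Sum>i<n. l i) = 1"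
    and g: "\<And>i. i < n \<Longrightarrow> bounded_linear (g i)"
    and z: "\<And>i. i < n \<Longrightarrow> norm (z i) \<le> 1 \<and> t i < g i (z i)"
    and t: "\<And>i. i < n \<Longrightarrow> 0 < t i"
    and "\<delta> > 0"
  obtains x x' where
    "\<And>i. i < n \<Longrightarrow> norm (x i) \<le> 1 \<and> t i < g i (x i)"
    "\<And>i. i < n \<Longrightarrow> norm (x' i) \<le> 1 \<and> t i < g i (x' i)"
    "2 - \<delta> < norm ((\<Sum>i<n. l i *\<^sub>R x i) - (\<Sum>i<n. l i *\<^sub>R x' i))"
proof -
  let ?E = "normed_space_of TYPE('c)"
  define s where "s i = (SUP x\<in>{x. norm x \<le> 1}. g i x)" for i
  have st: "t i < s i" if i: "i < n" for i
    using cSUP_upper[OF _ bounded_linear_bdd_above_ball[OF g[OF i]], of "z i"] z[OF i]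
    unfolding s_def by auto
  have s_pos: "s i > 0" if "i < n" for i using st[OF that] t[OF that] by linarith
  have slice: "x \<in> slice ?E (\<lambda>x. g i x / s i) (1 - t i / s i) \<longleftrightarrow> norm x \<le> 1 \<and> t i < g i x"
    if "i < n" for i x
    using s_pos[OF that] by (auto simp: slice_def field_simps)
  let ?S = "{lincomb ?E n l x | x. \<forall>i<n. x i \<in> slice ?E (\<lambda>x. g i x / s i) (1 - t i / s i)}"
  have "\<forall>i<n. dual_unit ?E (\<lambda>x. g i x / s i) \<and> 0 < 1 - t i / s i \<and> 1 - t i / s i < 1"
    using g st s_pos t by (simp add: dual_unit_normalize s_def field_simps)
  then have "ndiam ?E ?S = 2"
    using SD[unfolded SD2P_def, rule_format, of n l "\<lambda>i x. g i x / s i" "\<lambda>i. 1 - t i / s i"] n l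
    by blast
  then have "2 - \<delta> < Sup {norm (a - b) | a b. a \<in> ?S \<and> b \<in> ?S}"
    using \<open>\<delta> > 0\<close> unfolding ndiam_def by simp
  moreover have "lincomb ?E n l z \<in> ?S" using slice z by blast
  ultimately obtain a b where ab: "a \<in> ?S" "b \<in> ?S" "2 - \<delta> < norm (a - b)"
    using less_cSupD[of "{norm (a - b) | a b. a \<in> ?S \<and> b \<in> ?S}" "2 - \<delta>"] by blast
  then show ?thesis
    using that slice unfolding lincomb_normed_space_of by fastforce
qed

lemma SD2P_slices_far_apart:
  fixes g :: "nat \<Rightarrow> 'c::real_normed_vector \<Rightarrow> real"
  assumes SD: "SD2P (normed_space_of TYPE('c))"
    and n: "n > 0" and l: "\<forall>i<n. 0 \<le> l i" "(\<Sum>i<n. l i) = 1"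
    and g: "\<And>i. i < n \<Longrightarrow> bounded_linear (g i)"
    and z: "\<And>i. i < n \<Longrightarrow> norm (z i) \<le> 1 \<and> t i < g i (z i)"
    and t: "\<And>i. i < n \<Longrightarrow> 0 < t i"
    and "\<delta> > 0"
  obtains x x' h where
    "\<And>i. i < n \<Longrightarrow> norm (x i) \<le> 1 \<and> t i < g i (x i)"
    "\<And>i. i < n \<Longrightarrow> norm (x' i) \<le> 1 \<and> t i < g i (x' i)"
    "linear h" "\<And>x. \<bar>h x\<bar> \<le> norm x" "(\<Sum>i<n. l i * (h (x i) - h (x' i))) > 2 - \<delta>"
proof -
  obtain x x' where x: "\<And>i. i < n \<Longrightarrow> norm (x i) \<le> 1 \<and> t i < g i (x i)"
    and x': "\<And>i. i < n \<Longrightarrow> norm (x' i) \<le> 1 \<and> t i < g i (x' i)"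
    and far: "2 - \<delta> < norm ((\<Sum>i<n. l i *\<^sub>R x i) - (\<Sum>i<n. l i *\<^sub>R x' i))"
  proof (rule SD2P_slices_diameter[OF SD n l, of g z t \<delta>])
    show "bounded_linear (g i)" "norm (z i) \<le> 1 \<and> t i < g i (z i)" "0 < t i" if "i < n" for i
      using that g z t by auto
  qed (use \<open>\<delta> > 0\<close> that in blast)+
  obtain h where h: "linear h" "\<And>x. \<bar>h x\<bar> \<le> norm x"
    "h ((\<Sum>i<n. l i *\<^sub>R x i) - (\<Sum>i<n. l i *\<^sub>R x' i))
      = norm ((\<Sum>i<n. l i *\<^sub>R x i) - (\<Sum>i<n. l i *\<^sub>R x' i))"
    using norming_functional_exists by blast
  have "(\<Sum>i<n. l i * (h (x i) - h (x' i)))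
      = h ((\<Sum>i<n. l i *\<^sub>R x i) - (\<Sum>i<n. l i *\<^sub>R x' i))"
    by (simp add: linear_diff[OF h(1)] linear_sum[OF h(1)] linear_scale[OF h(1)] sum_subtractf
        right_diff_distrib)
  then show ?thesis using h(3) far by (intro that[OF x x' h(1,2)]) simp_all
qed

lemma SD2P_slices_normed:
  fixes g :: "nat \<Rightarrow> 'c::real_normed_vector \<Rightarrow> real"
  assumes SD: "SD2P (normed_space_of TYPE('c))"
    and n: "n > 0" and l: "\<forall>i<n. 0 \<le> l i" "(\<Sum>i<n. l i) = 1"
    and g: "\<And>i. i < n \<Longrightarrow> bounded_linear (g i)"
    and z: "\<And>i. i < n \<Longrightarrow> norm (z i) \<le> 1 \<and> t i < g i (z i)"
    and t: "\<And>i. i < n \<Longrightarrow> 0 < t i"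
    and "\<delta> > 0"
  obtains x h where "\<And>i. i < n \<Longrightarrow> norm (x i) \<le> 1 \<and> t i < g i (x i)"
    "linear h" "\<And>x. \<bar>h x\<bar> \<le> norm x" "(\<Sum>i<n. l i * h (x i)) > 1 - \<delta>"
proof -
  obtain x x' h where x: "\<And>i. i < n \<Longrightarrow> norm (x i) \<le> 1 \<and> t i < g i (x i)"
    and x': "\<And>i. i < n \<Longrightarrow> norm (x' i) \<le> 1 \<and> t i < g i (x' i)"
    and h: "linear h" "\<And>x. \<bar>h x\<bar> \<le> norm x" "(\<Sum>i<n. l i * (h (x i) - h (x' i))) > 2 - \<delta>"
  proof (rule SD2P_slices_far_apart[OF SD n l, of g z t \<delta>])
    show "bounded_linear (g i)" "norm (z i) \<le> 1 \<and> t i < g i (z i)" "0 < t i" if "i < n" for i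
      using that g z t by auto
  qed (use \<open>\<delta> > 0\<close> that in blast)+
  have "-1 \<le> h (x' i)" if "i < n" for i
    using abs_le_D2[OF h(2)[of "x' i"]] x'[OF that] by linarith
  then have "(\<Sum>i<n. l i * (-1)) \<le> (\<Sum>i<n. l i * h (x' i))"
    using l(1) by (intro sum_mono mult_left_mono) auto
  then have "(\<Sum>i<n. l i * h (x i)) > 1 - \<delta>"
    using h(3) l(2) by (simp add: right_diff_distrib sum_subtractf sum_negf)
  then show ?thesis using that x h(1,2) by blast
qed

text \<open>Testing against the bilinear form hx \<otimes> hy: for |a|, |a'|, b \<le> 1 one has
  (a - a') b \<ge> 2 b + (a - a') - 2, since (2 - (a - a')) (1 - b) \<ge> 0.\<close>
lemma proj_norm_lincomb_delta_diff:
  fixes x x' :: "nat \<Rightarrow> 'a::real_normed_vector" and y :: "nat \<Rightarrow> 'b::real_normed_vector"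
  assumes hx: "linear hx" "\<And>x. \<bar>hx x\<bar> \<le> norm x" and hy: "linear hy" "\<And>y. \<bar>hy y\<bar> \<le> norm y"
    and norms: "\<And>i. i < n \<Longrightarrow> norm (x i) \<le> 1 \<and> norm (x' i) \<le> 1 \<and> norm (y i) \<le> 1"
    and l: "\<And>i. i < n \<Longrightarrow> 0 \<le> l i" "(\<Sum>i<n. l i) = 1"
  shows "2 * (\<Sum>i<n. l i * hy (y i)) + (\<Sum>i<n. l i * (hx (x i) - hx (x' i))) - 2
    \<le> proj_norm (\<lambda>p. (\<Sum>i<n. l i * delta (x i) (y i) p) - (\<Sum>i<n. l i * delta (x' i) (y i) p))"
    (is "_ \<le> proj_norm ?W")
proof -
  define B where "B a b = hx a * hy b" for a b
  have "bilinear B"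
    unfolding bilinear_def B_def
    using hx(1) hy(1) by (auto intro!: linearI simp: linear_add linear_scale distrib_left distrib_right)
  moreover have "B a b \<le> norm a * norm b" for a b
  proof -
    have "B a b \<le> \<bar>hx a\<bar> * \<bar>hy b\<bar>" unfolding B_def by (metis abs_ge_self abs_mult)
    also have "\<dots> \<le> norm a * norm b" using hx(2) hy(2) by (intro mult_mono) auto
    finally show ?thesis .
  qed
  ultimately have le: "tensor_functional B ?W \<le> proj_norm ?W"
    by (intro tensor_functional_le_proj_norm free_vs_diff free_vs_sum free_vs_delta)
  have termwise: "l i * (2 * hy (y i) + (hx (x i) - hx (x' i)) - 2)
      \<le> l i * ((hx (x i) - hx (x' i)) * hy (y i))" if i: "i < n" for i
  proof -
    have "hx (x i) - hx (x' i) \<le> 2" "hy (y i) \<le> 1"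
      using hx(2)[of "x i"] hx(2)[of "x' i"] hy(2)[of "y i"] norms[OF i] by (auto simp: abs_le_iff)
    then have "0 \<le> (2 - (hx (x i) - hx (x' i))) * (1 - hy (y i))" by simp
    then show ?thesis using l(1)[OF i] by (intro mult_left_mono) (auto simp: algebra_simps)
  qed
  have "2 * (\<Sum>i<n. l i * hy (y i)) + (\<Sum>i<n. l i * (hx (x i) - hx (x' i))) - 2
      = (\<Sum>i<n. l i * (2 * hy (y i) + (hx (x i) - hx (x' i)) - 2))"
    using l(2) by (simp add: algebra_simps sum.distrib sum_subtractf sum_distrib_left
        sum_distrib_right[symmetric])
  also have "\<dots> \<le> (\<Sum>i<n. l i * ((hx (x i) - hx (x' i)) * hy (y i)))"
    using termwise by (intro sum_mono) simp
  also have "\<dots> = tensor_functional B ?W"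
  proof -
    have W: "(\<lambda>p. \<Sum>i<n. l i * delta (x i) (y i) p) \<in> free_vs"
      "(\<lambda>p. \<Sum>i<n. l i * delta (x' i) (y i) p) \<in> free_vs"
      by (rule free_vs_sum, rule free_vs_delta)+
    have "tensor_functional B ?W = (\<Sum>i<n. l i * B (x i) (y i)) - (\<Sum>i<n. l i * B (x' i) (y i))"
      unfolding tensor_functional_diff[OF W] tensor_functional_sum[OF free_vs_delta]
        tensor_functional_delta ..
    then show ?thesis unfolding B_def by (simp add: sum_subtractf[symmetric] algebra_simps)
  qed
  finally show ?thesis using le by linarith
qed

lemma elementary_slices_far_apart:
  fixes f :: "nat \<Rightarrow> (nat \<Rightarrow> 'a::real_normed_vector \<times> 'b::real_normed_vector \<Rightarrow> real) \<Rightarrow> real"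
  assumes f: "\<And>i. i < n \<Longrightarrow> ptensor_dual_unit (f i)"
    and x: "\<And>i. i < n \<Longrightarrow> norm (x i) \<le> 1 \<and> 1 - \<alpha> i < ptensor_dual_unit.form (f i) (x i) (y i)"
    and x': "\<And>i. i < n \<Longrightarrow> norm (x' i) \<le> 1 \<and> 1 - \<alpha> i < ptensor_dual_unit.form (f i) (x' i) (y i)"
    and y: "\<And>i. i < n \<Longrightarrow> norm (y i) \<le> 1"
    and hx: "linear hx" "\<And>x. \<bar>hx x\<bar> \<le> norm x" and hy: "linear hy" "\<And>y. \<bar>hy y\<bar> \<le> norm y"
    and l: "\<forall>i<n. 0 \<le> l i" "(\<Sum>i<n. l i) = 1"
  obtains u v where "\<And>i. i < n \<Longrightarrow> u i \<in> slice ptensor (f i) (\<alpha> i)"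
    "\<And>i. i < n \<Longrightarrow> v i \<in> slice ptensor (f i) (\<alpha> i)"
    "2 * (\<Sum>i<n. l i * hy (y i)) + (\<Sum>i<n. l i * (hx (x i) - hx (x' i))) - 2
      \<le> vnorm ptensor (vadd ptensor (lincomb ptensor n l u) (vscale ptensor (-1) (lincomb ptensor n l v)))"
proof -
  define u where "u i = (\<lambda>_::nat. delta (x i) (y i))" for i
  define v where "v i = (\<lambda>_::nat. delta (x' i) (y i))" for i
  define W where "W p = (\<Sum>i<n. l i * delta (x i) (y i) p) - (\<Sum>i<n. l i * delta (x' i) (y i) p)" for p
  have u: "u i \<in> slice ptensor (f i) (\<alpha> i)" and v: "v i \<in> slice ptensor (f i) (\<alpha> i)" if "i < n" for i
    unfolding u_def v_def using x[OF that] x'[OF that] y[OF that]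
    by (auto intro!: ptensor_dual_unit.delta_in_slice[OF f[OF that]])
  have "2 * (\<Sum>i<n. l i * hy (y i)) + (\<Sum>i<n. l i * (hx (x i) - hx (x' i))) - 2 \<le> proj_norm W"
    unfolding W_def using x x' y l by (intro proj_norm_lincomb_delta_diff[OF hx hy]) auto
  also have "proj_norm W
      = vnorm ptensor (vadd ptensor (lincomb ptensor n l u) (vscale ptensor (-1) (lincomb ptensor n l v)))"
  proof -
    have "vadd ptensor (lincomb ptensor n l u) (vscale ptensor (-1) (lincomb ptensor n l v)) = (\<lambda>_. W)"
      unfolding lincomb_ptensor u_def v_def W_def by simp
    then show ?thesis by (simp only: vnorm_ptensor_const)
  qed
  finally show ?thesis using that u v by blast
qed

lemma ptensor_slices_far_apart:
  fixes f :: "nat \<Rightarrow> (nat \<Rightarrow> 'a::real_normed_vector \<times> 'b::real_normed_vector \<Rightarrow> real) \<Rightarrow> real"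
  assumes SX: "SD2P (normed_space_of TYPE('a))" and SY: "SD2P (normed_space_of TYPE('b))"
    and n: "n > 0" and l: "\<forall>i<n. 0 \<le> l i" "(\<Sum>i<n. l i) = 1"
    and f: "\<And>i. i < n \<Longrightarrow> ptensor_dual_unit (f i)"
    and \<alpha>: "\<And>i. i < n \<Longrightarrow> 0 < \<alpha> i \<and> \<alpha> i < 1"
    and "\<epsilon> > 0"
  obtains u v where "\<And>i. i < n \<Longrightarrow> u i \<in> slice ptensor (f i) (\<alpha> i)"
    "\<And>i. i < n \<Longrightarrow> v i \<in> slice ptensor (f i) (\<alpha> i)"
    "vnorm ptensor (vadd ptensor (lincomb ptensor n l u) (vscale ptensor (-1) (lincomb ptensor n l v)))
      > 2 - \<epsilon>"
proof -
  define B where "B i = ptensor_dual_unit.form (f i)" for i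
  have B: "bounded_bilinear (B i)" if "i < n" for i
    unfolding B_def using ptensor_dual_unit.form_bounded_bilinear[OF f[OF that]] .
  have "\<exists>x0 y0. norm x0 \<le> 1 \<and> norm y0 \<le> 1 \<and> B i x0 y0 > 1 - \<alpha> i" if "i < n" for i
    unfolding B_def using ptensor_dual_unit.slice_contains_elementary[OF f[OF that]] \<alpha>[OF that] by blast
  then obtain x0 y0 where xy0: "\<And>i. i < n \<Longrightarrow> norm (x0 i) \<le> 1 \<and> norm (y0 i) \<le> 1 \<and> B i (x0 i) (y0 i) > 1 - \<alpha> i"
    by metis
  define \<delta> where "\<delta> = \<epsilon> / 3"
  have "\<delta> > 0" using \<open>\<epsilon> > 0\<close> unfolding \<delta>_def by simp
  obtain y hy where
    y: "\<And>i. i < n \<Longrightarrow> norm (y i) \<le> 1 \<and> 1 - \<alpha> i < B i (x0 i) (y i)"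
    and hy: "linear hy" "\<And>y. \<bar>hy y\<bar> \<le> norm y" and hy_y: "(\<Sum>i<n. l i * hy (y i)) > 1 - \<delta>"
  proof (rule SD2P_slices_normed[OF SY n l, of "\<lambda>i. B i (x0 i)" y0 "\<lambda>i. 1 - \<alpha> i" \<delta>])
    fix i assume "i < n"
    then show "bounded_linear (B i (x0 i))" "norm (y0 i) \<le> 1 \<and> 1 - \<alpha> i < B i (x0 i) (y0 i)"
      "0 < 1 - \<alpha> i"
      using bounded_bilinear.bounded_linear_right[OF B] xy0 \<alpha> by auto
  qed (use \<open>\<delta> > 0\<close> that in blast)+
  obtain x x' hx where
    x: "\<And>i. i < n \<Longrightarrow> norm (x i) \<le> 1 \<and> 1 - \<alpha> i < B i (x i) (y i)"
    and x': "\<And>i. i < n \<Longrightarrow> norm (x' i) \<le> 1 \<and> 1 - \<alpha> i < B i (x' i) (y i)"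
    and hx: "linear hx" "\<And>x. \<bar>hx x\<bar> \<le> norm x" "(\<Sum>i<n. l i * (hx (x i) - hx (x' i))) > 2 - \<delta>"
  proof (rule SD2P_slices_far_apart[OF SX n l, of "\<lambda>i x. B i x (y i)" x0 "\<lambda>i. 1 - \<alpha> i" \<delta>])
    fix i assume "i < n"
    then show "bounded_linear (\<lambda>x. B i x (y i))" "norm (x0 i) \<le> 1 \<and> 1 - \<alpha> i < B i (x0 i) (y i)"
      "0 < 1 - \<alpha> i"
      using bounded_bilinear.bounded_linear_left[OF B] xy0 y \<alpha> by auto
  qed (use \<open>\<delta> > 0\<close> that in blast)+
  obtain u v where u: "\<And>i. i < n \<Longrightarrow> u i \<in> slice ptensor (f i) (\<alpha> i)"
    and v: "\<And>i. i < n \<Longrightarrow> v i \<in> slice ptensor (f i) (\<alpha> i)"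
    and far: "2 * (\<Sum>i<n. l i * hy (y i)) + (\<Sum>i<n. l i * (hx (x i) - hx (x' i))) - 2
      \<le> vnorm ptensor (vadd ptensor (lincomb ptensor n l u) (vscale ptensor (-1) (lincomb ptensor n l v)))"
  proof (rule elementary_slices_far_apart[of n f x \<alpha> y x' hx hy l])
    show "ptensor_dual_unit (f i)" "norm (y i) \<le> 1"
      "norm (x i) \<le> 1 \<and> 1 - \<alpha> i < ptensor_dual_unit.form (f i) (x i) (y i)"
      "norm (x' i) \<le> 1 \<and> 1 - \<alpha> i < ptensor_dual_unit.form (f i) (x' i) (y i)" if "i < n" for i
      using f[OF that] x[OF that] x'[OF that] y[OF that] unfolding B_def by auto
  qed (use hx hy l that in blast)+
  have "2 - \<epsilon>
      < vnorm ptensor (vadd ptensor (lincomb ptensor n l u) (vscale ptensor (-1) (lincomb ptensor n l v)))"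
    using far hy_y hx(3) unfolding \<delta>_def by linarith
  then show ?thesis using that u v by blast
qed

lemma lincomb_slices_diff_le_two:
  assumes u: "\<forall>i<n. u i \<in> slice ptensor (f i) (\<alpha> i)" and v: "\<forall>i<n. v i \<in> slice ptensor (f i) (\<alpha> i)"
    and l: "\<forall>i<n. 0 \<le> l i" "(\<Sum>i<n. l i) = 1"
  shows "vnorm ptensor (vadd ptensor (lincomb ptensor n l u) (vscale ptensor (-1) (lincomb ptensor n l v))) \<le> 2"
proof -
  have ball: "lincomb ptensor n l w \<in> carrier ptensor \<and> vnorm ptensor (lincomb ptensor n l w) \<le> 1"
    if w: "\<forall>i<n. w i \<in> slice ptensor (f i) (\<alpha> i)" for w
  proof -
    have w_ball: "w i \<in> carrier ptensor" "vnorm ptensor (w i) \<le> 1" if "i < n" for i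
      using w that unfolding slice_def by auto
    have "vnorm ptensor (lincomb ptensor n l w) \<le> (\<Sum>i<n. l i * vnorm ptensor (w i))"
      using w_ball l by (intro lincomb_ptensor_norm_le) auto
    also have "\<dots> \<le> (\<Sum>i<n. l i)"
      using w_ball l by (intro sum_mono mult_left_le) auto
    finally show ?thesis using w_ball l(2) by (auto intro: lincomb_ptensor_closed)
  qed
  show ?thesis using ptensor_norm_diff_le ball[OF u] ball[OF v] by fastforce
qed

lemma cSup_eq_approx:
  fixes D :: "real set"
  assumes "\<And>d. d \<in> D \<Longrightarrow> d \<le> c" "\<And>e. e > 0 \<Longrightarrow> \<exists>d\<in>D. c - e < d"
  shows "Sup D = c"
proof (rule cSup_eq_non_empty)
  show "D \<noteq> {}" using assms(2)[of 1] by auto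
  show "c \<le> b" if "\<And>d. d \<in> D \<Longrightarrow> d \<le> b" for b
  proof (rule field_le_epsilon)
    fix e :: real assume "e > 0"
    then obtain d where "d \<in> D" "c - e < d" using assms(2) by blast
    then show "c \<le> b + e" using that[OF \<open>d \<in> D\<close>] by linarith
  qed
qed (use assms(1) in blast)

theorem mainTheorem9:
  assumes "SD2P (normed_space_of TYPE('a::banach))"
      and "SD2P (normed_space_of TYPE('b::banach))"
  shows "SD2P (proj_tensor TYPE('a) TYPE('b))"
  unfolding SD2P_def
proof (intro allI impI)
  fix n :: nat and l :: "nat \<Rightarrow> real" and f :: "nat \<Rightarrow> (nat \<Rightarrow> 'a \<times> 'b \<Rightarrow> real) \<Rightarrow> real"
    and \<alpha> :: "nat \<Rightarrow> real"
  assume n: "n > 0" and l: "\<forall>i<n. 0 \<le> l i" "(\<Sum>i<n. l i) = 1"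
    and f\<alpha>: "\<forall>i<n. dual_unit ptensor (f i) \<and> 0 < \<alpha> i \<and> \<alpha> i < 1"
  let ?S = "{lincomb ptensor n l u | u. \<forall>i<n. u i \<in> slice ptensor (f i) (\<alpha> i)}"
  let ?D = "{vnorm ptensor (vadd ptensor a (vscale ptensor (-1) b)) | a b. a \<in> ?S \<and> b \<in> ?S}"
  show "ndiam ptensor ?S = 2"
    unfolding ndiam_def
  proof (rule cSup_eq_approx)
    fix d assume "d \<in> ?D"
    then show "d \<le> 2" using lincomb_slices_diff_le_two[OF _ _ l] by blast
  next
    fix e :: real assume "e > 0"
    then obtain u v where "\<And>i. i < n \<Longrightarrow> u i \<in> slice ptensor (f i) (\<alpha> i)"
      "\<And>i. i < n \<Longrightarrow> v i \<in> slice ptensor (f i) (\<alpha> i)"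
      "vnorm ptensor (vadd ptensor (lincomb ptensor n l u) (vscale ptensor (-1) (lincomb ptensor n l v)))
        > 2 - e"
      using ptensor_slices_far_apart[OF assms n l, of f \<alpha> e] f\<alpha> unfolding ptensor_dual_unit_def by blast
    then show "\<exists>d\<in>?D. 2 - e < d" by blast
  qed
qed

end
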